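(* Consider a network as described in the context that is cooperative and large enough. Then for every initial state $\mathbf x(0)$ with $S_i(x_i(0))\in[0,\theta_i)$ for all $i$, the grand coalition is exhibited infinitely many times in the future. That is, there are infinitely many spiking instants $t_n$ with $I(t_n)=\{1,\dots,m\}$.
   Context: Network model. Fix an integer $m\ge 2$ (the number of units, or cells). For each $i\in\{1,\dots,m\}$ the following data are given. - $X_i$ is a compact finite-dimensional smooth manifold. - $f_i$ is a continuous vector field on $X_i$. - $S_i:X_i\to\mathbb R$ is a $C^1$ function, called the satisfaction level. - $\theta_i>0$ is a constant, called the goal. These are required to satisfy: there is $v_i>0$ with $\nabla S_i(x)\cdot f_i(x)>v_i$ for every $x\in X_i$ with $S_i(x)<\theta_i$. Real interaction weights $\Delta_{ij}$ are given for $i\ne j$. The global state $\mathbf x(t)=(x_1(t),\dots,x_m(t))\in\prod_i X_i$, $t\ge 0$, evolves as follows. Spiking instants $0\le t_0<t_1<\cdots$ are the instants at which at least one cell spikes. Between consecutive spiking instants each $x_i$ evolves independently by $dx_i/dt=f_i(x_i)$. At an instant $t_n$, write $S_j(x_j(t_n^-))=\lim_{t\to t_n^-}S_j(x_j(t))$. The coalition is $I(t_n)=\bigcup_{p\ge 0}I_p(t_n)$, where: - $I_0(t_n)$ is the set of cells $i$ with $S_i(x_i(t_n^-))\ge\theta_i$; - for $p\ge1$, $I_p(t_n)$ is the set of cells $j\notin\bigcup_{k<p}I_k(t_n)$ with $S_j(x_j(t_n^-))+\sum_{k<p}\sum_{i\in I_k(t_n)}\Delta_{ij}\ge\theta_j$.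 The spiking instants are exactly the instants with $I_0(t_n)\neq\emptyset$, and the cells in $I(t_n)$ are said to spike at $t_n$. At $t_n$ the state jumps as follows: - for $j\in I(t_n)$, $x_j(t_n)$ is a point with $S_j(x_j(t_n))=0$; - for $j\notin I(t_n)$, $x_j(t_n)$ is a point with $S_j(x_j(t_n))=S_j(x_j(t_n^-))+\sum_{i\in I(t_n),\,i\ne j}\Delta_{ij}$. Initial states are assumed to satisfy $S_i(x_i(0))\in[0,\theta_i)$ for all $i$. The network is cooperative if $\Delta_{ij}\ge 0$ for all $i\ne j$. A cooperative network is large enough if $\sqrt m\ge 1+\frac{\max_i\theta_i}{\min_{i\ne j}\Delta_{ij}}$; in particular this requires $\Delta_{ij}>0$ for all $i\ne j$. The grand coalition is exhibited at $t_n$ if $I(t_n)=\{1,\dots,m\}$. *)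

theory Defs
  imports "HOL-Analysis.Analysis"
begin

text \<open>Cells are indexed by the finite set C (in the theorem C = {1..m}).
  s j is the left-limit satisfaction level of cell j at the current instant,
  th j the goal of cell j, D i j the interaction weight from i to j.\<close>

definition next_layer ::
  "nat set \<Rightarrow> (nat \<Rightarrow> real) \<Rightarrow> (nat \<Rightarrow> nat \<Rightarrow> real) \<Rightarrow> (nat \<Rightarrow> real) \<Rightarrow> nat set list \<Rightarrow> nat set" where
  "next_layer C th D s ls =
     {j \<in> C. j \<notin> \<Union>(set ls) \<and> s j + (\<Sum>k<length ls. \<Sum>i\<in>ls ! k. D i j) \<ge> th j}"

fun layers ::
  "nat set \<Rightarrow> (nat \<Rightarrow> real) \<Rightarrow> (nat \<Rightarrow> nat \<Rightarrow> real) \<Rightarrow> (nat \<Rightarrow> real) \<Rightarrow> nat \<Rightarrow> nat set list" where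
  "layers C th D s 0 = [next_layer C th D s []]"
| "layers C th D s (Suc p) = layers C th D s p @ [next_layer C th D s (layers C th D s p)]"

definition layer ::
  "nat set \<Rightarrow> (nat \<Rightarrow> real) \<Rightarrow> (nat \<Rightarrow> nat \<Rightarrow> real) \<Rightarrow> (nat \<Rightarrow> real) \<Rightarrow> nat \<Rightarrow> nat set" where
  "layer C th D s p = layers C th D s p ! p"

definition coalition ::
  "nat set \<Rightarrow> (nat \<Rightarrow> real) \<Rightarrow> (nat \<Rightarrow> nat \<Rightarrow> real) \<Rightarrow> (nat \<Rightarrow> real) \<Rightarrow> nat set" where
  "coalition C th D s = (\<Union>p. layer C th D s p)"

definition S_left :: "(nat \<Rightarrow> 'a \<Rightarrow> real) \<Rightarrow> (nat \<Rightarrow> real \<Rightarrow> 'a) \<Rightarrow> nat \<Rightarrow> real \<Rightarrow> real" where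
  "S_left S x i t = Lim (at_left t) (\<lambda>r. S i (x i r))"

definition spiking_instants ::
  "nat set \<Rightarrow> (nat \<Rightarrow> real) \<Rightarrow> (nat \<Rightarrow> nat \<Rightarrow> real) \<Rightarrow> (nat \<Rightarrow> 'a \<Rightarrow> real) \<Rightarrow> (nat \<Rightarrow> real \<Rightarrow> 'a) \<Rightarrow> real set" where
  "spiking_instants C th D S x = {t. t > 0 \<and> layer C th D (\<lambda>j. S_left S x j t) 0 \<noteq> {}}"

definition cooperative :: "nat set \<Rightarrow> (nat \<Rightarrow> nat \<Rightarrow> real) \<Rightarrow> bool" where
  "cooperative C D \<longleftrightarrow> (\<forall>i\<in>C. \<forall>j\<in>C. i \<noteq> j \<longrightarrow> D i j \<ge> 0)"

definition large_enough :: "nat \<Rightarrow> (nat \<Rightarrow> real) \<Rightarrow> (nat \<Rightarrow> nat \<Rightarrow> real) \<Rightarrow> bool" where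
  "large_enough m th D \<longleftrightarrow>
     (\<forall>i\<in>{1..m}. \<forall>j\<in>{1..m}. i \<noteq> j \<longrightarrow> D i j > 0) \<and>
     sqrt (real m) \<ge> 1 + Max (th ` {1..m}) /
        Min ((\<lambda>(i, j). D i j) ` {(i, j). i \<in> {1..m} \<and> j \<in> {1..m} \<and> i \<noteq> j})"

end

theory Submission
  imports Defs
begin

text \<open>Potential argument. Between spiking instants every level \<open>S\<^sub>i(x\<^sub>i)\<close> increases.
  Compared with its value after the previous spiking instant, at a spiking instant with
  coalition \<open>I\<close> the level changes by more than \<open>-\<theta>\<^sub>i\<close> if \<open>i \<in> I\<close> and by at least
  \<open>\<Delta> |I|\<close> otherwise, \<open>\<Delta>\<close> being the smallest weight. As levels stay in \<open>[0, \<theta>\<^sub>i)\<close>, the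
  total of these lower bounds over all cells and all spiking instants up to any time is
  less than \<open>m \<theta>\<close>, \<open>\<theta>\<close> being the largest goal. If \<open>I\<close> is not everything, a cell outside
  \<open>I\<close> starts from a nonnegative level and stays below its goal, so \<open>\<Delta> |I| < \<theta>\<close>, and the
  instant contributes at least \<open>|I| (m \<Delta> - |I| \<Delta> - \<theta>) \<ge> m \<Delta> - 2 \<theta>\<close>, which is positive
  for a large enough network; a grand coalition costs at most \<open>m \<theta>\<close>. Spiking instants
  never stop, since each level grows at rate at least \<open>v\<^sub>i\<close> towards its goal, so finitely
  many grand coalitions would make the total unbounded.\<close>

lemma length_layers [simp]: "length (layers C th D s p) = Suc p"
  by (induct p) auto

lemma layer_0: "layer C th D s 0 = {j \<in> C. th j \<le> s j}"
  by (simp add: layer_def next_layer_def)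

lemma layer_Suc: "layer C th D s (Suc p) = next_layer C th D s (layers C th D s p)"
  by (simp add: layer_def nth_append)

lemma layer_eq_next_layer_take: "layer C th D s p = next_layer C th D s (take p (layers C th D s p))"
  by (cases p) (simp_all add: layer_def nth_append)

lemma nth_layers: "q \<le> p \<Longrightarrow> layers C th D s p ! q = layer C th D s q"
proof (induct p)
  case 0
  then show ?case by (simp add: layer_def)
next
  case (Suc p)
  then show ?case by (cases "q = Suc p") (auto simp: layer_def nth_append)
qed

lemma set_layers: "set (layers C th D s p) = layer C th D s ` {..p}"
proof -
  have "set (layers C th D s p) = {layers C th D s p ! q | q. q < Suc p}"
    by (simp add: set_conv_nth)
  also have "\<dots> = layer C th D s ` {..p}"
    using nth_layers[of _ p C th D s] by (auto simp: less_Suc_eq_le)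
  finally show ?thesis .
qed

lemma layer_subset: "layer C th D s p \<subseteq> C"
  by (cases p) (auto simp: layer_0 layer_Suc next_layer_def)

lemma layer_disjoint: "q < r \<Longrightarrow> layer C th D s q \<inter> layer C th D s r = {}"
proof -
  assume "q < r"
  then obtain r' where "r = Suc r'" "q \<le> r'" by (cases r) auto
  then show ?thesis by (auto simp: layer_Suc next_layer_def set_layers)
qed

lemma sum_layers:
  assumes "finite C"
  shows "(\<Sum>k<length (layers C th D s p). \<Sum>i\<in>layers C th D s p ! k. g i)
       = (\<Sum>i\<in>(\<Union>q\<le>p. layer C th D s q). g i)"
proof -
  have "(\<Sum>k<length (layers C th D s p). \<Sum>i\<in>layers C th D s p ! k. g i)
      = (\<Sum>q\<le>p. \<Sum>i\<in>layer C th D s q. g i)"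
    by (simp add: lessThan_Suc_atMost nth_layers)
  also have "\<dots> = (\<Sum>i\<in>(\<Union>q\<le>p. layer C th D s q). g i)"
    by (rule sum.UNION_disjoint[symmetric])
      (auto intro: finite_subset[OF layer_subset assms] dest: layer_disjoint[of _ _ C th D s]
        simp: disjoint_iff linorder_neq_iff)
  finally show ?thesis .
qed

lemma layer_Suc_empty:
  assumes "layer C th D s p = {}"
  shows "layer C th D s (Suc p) = {}"
proof -
  have "layers C th D s p = take p (layers C th D s p) @ [{}]"
    using take_Suc_conv_app_nth[of p "layers C th D s p"] assms by (simp add: layer_def)
  then have "layer C th D s (Suc p) = next_layer C th D s (take p (layers C th D s p) @ [{}])"
    by (metis layer_Suc)
  also have "\<dots> = layer C th D s p"
    by (simp add: next_layer_def nth_append layer_eq_next_layer_take[of C th D s p])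
  finally show ?thesis using assms by simp
qed

lemma layer_empty_mono:
  assumes "layer C th D s q = {}" "q \<le> r"
  shows "layer C th D s r = {}"
  using assms(2) by (induct r rule: dec_induct) (use assms(1) layer_Suc_empty in auto)

lemma ex_empty_layer:
  assumes "finite C"
  shows "\<exists>q. layer C th D s q = {}"
proof (rule ccontr)
  assume "\<not> ?thesis"
  then have nonempty: "\<forall>q. layer C th D s q \<noteq> {}" by auto
  have fin: "\<forall>q. finite (layer C th D s q)"
    using finite_subset[OF layer_subset assms] by blast
  have "Suc (card C) = (\<Sum>q\<le>card C. 1)" by simp
  also have "\<dots> \<le> (\<Sum>q\<le>card C. card (layer C th D s q))"
    by (rule sum_mono) (use nonempty fin in \<open>auto simp: Suc_le_eq card_gt_0_iff\<close>)
  also have "\<dots> = card (\<Union>q\<le>card C. layer C th D s q)"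
    by (rule card_UN_disjoint[symmetric])
      (auto simp: fin disjoint_iff linorder_neq_iff dest: layer_disjoint[of _ _ C th D s])
  also have "\<dots> \<le> card C"
    by (rule card_mono[OF assms]) (use layer_subset in blast)
  finally show False by simp
qed

lemma coalition_subset: "coalition C th D s \<subseteq> C"
  using layer_subset[of C th D s] by (auto simp: coalition_def)

lemma layer_subset_coalition: "layer C th D s p \<subseteq> coalition C th D s"
  by (auto simp: coalition_def)

lemma coalition_eq_UN_layers:
  assumes "layer C th D s q = {}"
  shows "coalition C th D s = (\<Union>p\<le>q. layer C th D s p)"
proof
  show "coalition C th D s \<subseteq> (\<Union>p\<le>q. layer C th D s p)"
    unfolding coalition_def
  proof
    fix j assume "j \<in> (\<Union>p. layer C th D s p)"
    then obtain p where "j \<in> layer C th D s p" by blast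
    moreover from this have "p \<le> q" using layer_empty_mono[OF assms, of p] by fastforce
    ultimately show "j \<in> (\<Union>p\<le>q. layer C th D s p)" by blast
  qed
qed (auto simp: coalition_def)

lemma not_in_coalition_below_threshold:
  assumes "finite C" "j \<in> C" "j \<notin> coalition C th D s"
  shows "s j + (\<Sum>i\<in>coalition C th D s. D i j) < th j"
proof -
  obtain q where q: "layer C th D s q = {}" using ex_empty_layer[OF assms(1)] by blast
  have "j \<notin> layer C th D s (Suc q)" "j \<notin> \<Union>(set (layers C th D s q))"
    using assms(3) by (auto simp: set_layers coalition_def)
  then have "\<not> th j \<le> s j + (\<Sum>k<length (layers C th D s q). \<Sum>i\<in>layers C th D s q ! k. D i j)"
    using assms(2) by (auto simp: layer_Suc next_layer_def)
  then show ?thesis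
    unfolding sum_layers[OF assms(1)] coalition_eq_UN_layers[OF q] by simp
qed

lemma linear_growth_of_derivative_ge:
  fixes z g :: "real \<Rightarrow> real"
  assumes "a \<le> b" "continuous_on {a..b} z"
    and "\<And>t. a < t \<Longrightarrow> t < b \<Longrightarrow> (z has_real_derivative g t) (at t)"
    and "\<And>t. a < t \<Longrightarrow> t < b \<Longrightarrow> v \<le> g t"
  shows "z a + v * (b - a) \<le> z b"
proof -
  have "z a - v * a \<le> z b - v * b"
  proof (rule DERIV_nonneg_imp_increasing_open[OF assms(1), of "\<lambda>t. z t - v * t"])
    fix t assume "a < t" "t < b"
    then show "\<exists>r. ((\<lambda>t. z t - v * t) has_real_derivative r) (at t) \<and> 0 \<le> r"
      using assms(3,4) by (intro exI[of _ "g t - v"]) (auto intro!: derivative_eq_intros)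
  next
    show "continuous_on {a..b} (\<lambda>t. z t - v * t)"
      using assms(2) by (intro continuous_intros)
  qed
  then show ?thesis by (simp add: algebra_simps)
qed

lemma tendsto_SUP_at_left_mono:
  fixes z :: "real \<Rightarrow> real"
  assumes "a < b" and mono: "\<And>s t. a \<le> s \<Longrightarrow> s \<le> t \<Longrightarrow> t < b \<Longrightarrow> z s \<le> z t"
    and bdd: "bdd_above (z ` {a..<b})"
  shows "(z \<longlongrightarrow> (SUP s\<in>{a..<b}. z s)) (at_left b)"
proof (rule increasing_tendsto)
  show "\<forall>\<^sub>F t in at_left b. z t \<le> (SUP s\<in>{a..<b}. z s)"
    using eventually_at_left_real[OF assms(1)]
    by (rule eventually_mono) (auto intro!: cSUP_upper bdd)
next
  fix l assume "l < (SUP s\<in>{a..<b}. z s)"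
  then obtain s where s: "s \<in> {a..<b}" "l < z s"
    using less_cSUP_iff[OF _ bdd] assms(1) by auto
  then have "\<forall>\<^sub>F t in at_left b. t \<in> {s<..<b}"
    by (intro eventually_at_left_real) auto
  then show "\<forall>\<^sub>F t in at_left b. l < z t"
  proof (rule eventually_mono)
    fix t assume "t \<in> {s<..<b}"
    then show "l < z t" using s mono[of s t] by auto
  qed
qed

lemma double_lt_of_one_plus_le_sqrt:
  fixes K r :: real
  assumes "0 \<le> K" "1 + K \<le> sqrt r"
  shows "2 * K < r"
proof -
  have "1 \<le> sqrt r" using assms by linarith
  then have "1 \<le> r" by simp
  have "1 + 2 * K + K * K = (1 + K)\<^sup>2" by (simp add: power2_eq_square algebra_simps)
  also have "\<dots> \<le> (sqrt r)\<^sup>2" using assms by (intro power_mono) auto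
  also have "\<dots> = r" using \<open>1 \<le> r\<close> by simp
  finally show ?thesis using assms(1) by (smt (verit) zero_le_square)
qed

locale spiking_network =
  fixes m :: nat
    and X :: "nat \<Rightarrow> 'a::euclidean_space set"
    and f :: "nat \<Rightarrow> 'a \<Rightarrow> 'a"
    and S :: "nat \<Rightarrow> 'a \<Rightarrow> real"
    and gradS :: "nat \<Rightarrow> 'a \<Rightarrow> 'a"
    and U :: "nat \<Rightarrow> 'a set"
    and th v :: "nat \<Rightarrow> real"
    and D :: "nat \<Rightarrow> nat \<Rightarrow> real"
    and x :: "nat \<Rightarrow> real \<Rightarrow> 'a"
  assumes m2: "m \<ge> 2"
    and S_C1: "\<forall>i\<in>{1..m}. open (U i) \<and> X i \<subseteq> U i \<and> continuous_on (U i) (gradS i) \<and>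
                 (\<forall>y\<in>U i. (S i has_derivative (\<lambda>h. gradS i y \<bullet> h)) (at y))"
    and th_pos: "\<forall>i\<in>{1..m}. th i > 0"
    and v_pos: "\<forall>i\<in>{1..m}. v i > 0"
    and drift: "\<forall>i\<in>{1..m}. \<forall>y\<in>X i. S i y < th i \<longrightarrow> gradS i y \<bullet> f i y > v i"
    and large: "large_enough m th D"
    and init: "\<forall>i\<in>{1..m}. 0 \<le> S i (x i 0) \<and> S i (x i 0) < th i"
    and in_X: "\<forall>i\<in>{1..m}. \<forall>t\<ge>0. x i t \<in> X i"
    and loc_fin: "\<forall>b. finite (spiking_instants {1..m} th D S x \<inter> {..b})"
    and flow: "\<forall>i\<in>{1..m}. \<forall>a b. 0 \<le> a \<and> a < b \<and> {a<..<b} \<inter> spiking_instants {1..m} th D S x = {} \<longrightarrow>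
                 (\<forall>t\<in>{a..<b}. (x i has_vector_derivative f i (x i t)) (at t within {a..<b}))"
    and jump: "\<forall>t\<in>spiking_instants {1..m} th D S x. \<forall>j\<in>{1..m}.
                 (j \<in> coalition {1..m} th D (\<lambda>k. S_left S x k t) \<longrightarrow> S j (x j t) = 0) \<and>
                 (j \<notin> coalition {1..m} th D (\<lambda>k. S_left S x k t) \<longrightarrow>
                    S j (x j t) = S_left S x j t +
                      (\<Sum>i\<in>coalition {1..m} th D (\<lambda>k. S_left S x k t) - {j}. D i j))"
begin

abbreviation cells :: "nat set" where "cells \<equiv> {1..m}"
abbreviation spikes :: "real set" where "spikes \<equiv> spiking_instants cells th D S x"
abbreviation level :: "nat \<Rightarrow> real \<Rightarrow> real" where "level i t \<equiv> S i (x i t)"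
abbreviation level_left :: "nat \<Rightarrow> real \<Rightarrow> real" where "level_left i t \<equiv> S_left S x i t"
abbreviation coal :: "real \<Rightarrow> nat set" where "coal t \<equiv> coalition cells th D (\<lambda>k. level_left k t)"

lemma spikes_pos: "t \<in> spikes \<Longrightarrow> 0 < t"
  by (simp add: spiking_instants_def)

lemma finite_spikes_atMost: "finite (spikes \<inter> {..T})"
  using loc_fin by blast

lemma spike_free_right:
  obtains c where "T < c" "{T<..<c} \<inter> spikes = {}"
proof
  define c where "c = Min (insert (T + 1) (spikes \<inter> {T<..T + 1}))"
  have fin: "finite (spikes \<inter> {T<..T + 1})"
    by (rule finite_subset[OF _ finite_spikes_atMost[of "T + 1"]]) auto
  show "T < c" using fin by (auto simp: c_def)
  show "{T<..<c} \<inter> spikes = {}"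
  proof (rule ccontr)
    assume "{T<..<c} \<inter> spikes \<noteq> {}"
    then obtain s where "s \<in> spikes" "T < s" "s < c" by auto
    moreover have "c \<le> s" if "s \<le> T + 1" using fin that calculation by (auto simp: c_def)
    moreover have "c \<le> T + 1" using fin by (simp add: c_def)
    ultimately show False by linarith
  qed
qed

lemma last_spike_before:
  assumes "t \<in> spikes"
  obtains a where "0 \<le> a" "a < t" "{a<..<t} \<inter> spikes = {}" "spikes \<inter> {..a} = spikes \<inter> {..<t}"
proof
  define a where "a = Max (insert 0 (spikes \<inter> {..<t}))"
  have fin: "finite (spikes \<inter> {..<t})"
    by (rule finite_subset[OF _ finite_spikes_atMost[of t]]) auto
  have le_a: "s \<le> a" if "s \<in> spikes" "s < t" for s using fin that by (simp add: a_def)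
  show "0 \<le> a" using fin by (simp add: a_def)
  show "a < t" using fin assms spikes_pos by (auto simp: a_def)
  show "{a<..<t} \<inter> spikes = {}" using le_a by force
  show "spikes \<inter> {..a} = spikes \<inter> {..<t}" using le_a \<open>a < t\<close> by force
qed

context
  fixes a b :: real and i :: nat
  assumes a_nonneg: "0 \<le> a" and a_less_b: "a < b" and no_spike: "{a<..<b} \<inter> spikes = {}"
    and i_cell: "i \<in> cells"
begin

lemma level_has_derivative:
  assumes "t \<in> {a..<b}"
  shows "((\<lambda>s. level i s) has_real_derivative gradS i (x i t) \<bullet> f i (x i t)) (at t within {a..<b})"
proof -
  have "(x i has_vector_derivative f i (x i t)) (at t within {a..<b})"
    using flow a_nonneg a_less_b no_spike i_cell assms by blast
  moreover have "x i t \<in> U i" using in_X S_C1 i_cell a_nonneg assms by fastforce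
  then have "(S i has_derivative (\<lambda>h. gradS i (x i t) \<bullet> h)) (at (x i t) within x i ` {a..<b})"
    using S_C1 i_cell has_derivative_at_withinI by blast
  ultimately have "((S i \<circ> x i) has_vector_derivative (gradS i (x i t) \<bullet> f i (x i t))) (at t within {a..<b})"
    by (rule vector_derivative_diff_chain_within)
  then show ?thesis
    by (simp add: has_real_derivative_iff_has_vector_derivative o_def)
qed

lemma level_continuous_on: "continuous_on {a..<b} (level i)"
  using level_has_derivative by (meson DERIV_continuous continuous_on_eq_continuous_within)

lemma level_has_derivative_at:
  assumes "t \<in> {a<..<b}"
  shows "((\<lambda>s. level i s) has_real_derivative gradS i (x i t) \<bullet> f i (x i t)) (at t)"
proof -
  have "((\<lambda>s. level i s) has_real_derivative gradS i (x i t) \<bullet> f i (x i t)) (at t within {a<..<b})"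
    by (rule DERIV_subset[OF level_has_derivative])
      (use assms in auto)
  then show ?thesis using assms at_within_open[of t "{a<..<b}"] by simp
qed

context
  assumes below_a: "level i a < th i"
begin

text \<open>Reaching the goal at an interior time would, by continuity, put \<open>i\<close> into \<open>I\<^sub>0\<close>
  there, i.e.\ create a spike.\<close>
lemma level_below_threshold:
  assumes "s \<in> {a..<b}"
  shows "level i s < th i"
proof (rule ccontr)
  assume "\<not> ?thesis"
  then have reached: "th i \<le> level i s" by simp
  with below_a assms have s: "s \<in> {a<..<b}" by (cases "s = a") auto
  have "isCont (level i) s"
    using level_has_derivative_at[OF s] DERIV_isCont by blast
  then have "((level i) \<longlongrightarrow> level i s) (at_left s)"
    by (simp add: isCont_def filterlim_at_split)
  then have "level_left i s = level i s"
    unfolding S_left_def by (intro tendsto_Lim) auto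
  then have "s \<in> spikes"
    using i_cell reached s a_nonneg by (auto simp: spiking_instants_def layer_0)
  then show False using no_spike s by blast
qed

lemma level_linear_growth:
  assumes "a \<le> s" "s \<le> s'" "s' < b"
  shows "level i s + v i * (s' - s) \<le> level i s'"
proof (rule linear_growth_of_derivative_ge[OF assms(2)])
  show "continuous_on {s..s'} (level i)"
    using level_continuous_on by (rule continuous_on_subset) (use assms in auto)
next
  fix t assume t: "s < t" "t < s'"
  with assms show "(level i has_real_derivative gradS i (x i t) \<bullet> f i (x i t)) (at t)"
    by (intro level_has_derivative_at) auto
  have "x i t \<in> X i" using in_X i_cell t assms a_nonneg by auto
  then show "v i \<le> gradS i (x i t) \<bullet> f i (x i t)"
    using drift i_cell level_below_threshold[of t] t assms by (auto intro: less_imp_le)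
qed

lemma level_left_ge: "level i a \<le> level_left i b"
proof -
  have bdd: "bdd_above (level i ` {a..<b})"
    using level_below_threshold by (intro bdd_aboveI[of _ "th i"]) (auto intro: less_imp_le)
  have mono: "level i s \<le> level i s'" if "a \<le> s" "s \<le> s'" "s' < b" for s s'
    using level_linear_growth[OF that] v_pos i_cell that(2) by (smt (verit) mult_nonneg_nonneg)
  have "level_left i b = (SUP s\<in>{a..<b}. level i s)"
    unfolding S_left_def
    by (intro tendsto_Lim tendsto_SUP_at_left_mono[OF a_less_b mono bdd]) auto
  also have "level i a \<le> \<dots>" using a_less_b by (intro cSUP_upper bdd) auto
  finally show ?thesis .
qed

end

end

lemma level_flow:
  assumes "0 \<le> a" "a \<le> T" "{a<..T} \<inter> spikes = {}" "i \<in> cells" "level i a < th i"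
  shows "level i a + v i * (T - a) \<le> level i T" "level i T < th i"
proof -
  obtain c where c: "T < c" "{T<..<c} \<inter> spikes = {}" using spike_free_right by blast
  have "{a<..<c} \<subseteq> {a<..T} \<union> {T<..<c}" by auto
  then have no_spike: "{a<..<c} \<inter> spikes = {}" using assms(3) c(2) by blast
  have "a < c" using assms(2) c(1) by simp
  from level_linear_growth[OF assms(1) this no_spike assms(4,5), of a T]
  show "level i a + v i * (T - a) \<le> level i T" using assms(2) c(1) by simp
  from level_below_threshold[OF assms(1) \<open>a < c\<close> no_spike assms(4,5), of T]
  show "level i T < th i" using assms(2) c(1) by simp
qed

definition D_min :: real where
  "D_min = Min ((\<lambda>(i, j). D i j) ` {(i, j). i \<in> cells \<and> j \<in> cells \<and> i \<noteq> j})"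

definition th_max :: real where
  "th_max = Max (th ` cells)"

lemma finite_off_diagonal: "finite {(i, j). i \<in> cells \<and> j \<in> cells \<and> i \<noteq> j}"
  by (rule finite_subset[of _ "cells \<times> cells"]) auto

lemma D_min_le: "i \<in> cells \<Longrightarrow> j \<in> cells \<Longrightarrow> i \<noteq> j \<Longrightarrow> D_min \<le> D i j"
  unfolding D_min_def using finite_off_diagonal by (intro Min_le) auto

lemma D_min_pos: "0 < D_min"
proof -
  have "(1, 2) \<in> {(i, j). i \<in> cells \<and> j \<in> cells \<and> i \<noteq> j}" using m2 by auto
  then have "D_min \<in> (\<lambda>(i, j). D i j) ` {(i, j). i \<in> cells \<and> j \<in> cells \<and> i \<noteq> j}"
    unfolding D_min_def using finite_off_diagonal by (intro Min_in) blast+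
  then show ?thesis using large by (auto simp: large_enough_def)
qed

lemma th_le_th_max: "i \<in> cells \<Longrightarrow> th i \<le> th_max"
  unfolding th_max_def by (intro Max_ge) auto

lemma th_max_pos: "0 < th_max"
proof -
  have "1 \<in> cells" using m2 by simp
  then show ?thesis using th_le_th_max[of 1] th_pos by fastforce
qed

lemma double_th_max_less: "2 * th_max < real m * D_min"
proof -
  have "2 * (th_max / D_min) < real m"
    using large th_max_pos D_min_pos
    by (intro double_lt_of_one_plus_le_sqrt) (auto simp: large_enough_def th_max_def D_min_def)
  then show ?thesis using D_min_pos by (simp add: field_simps)
qed

lemma sum_coalition_ge:
  assumes "j \<in> cells" "j \<notin> coal t"
  shows "D_min * real (card (coal t)) \<le> (\<Sum>i\<in>coal t. D i j)"
proof -
  have "real (card (coal t)) * D_min \<le> (\<Sum>i\<in>coal t. D i j)"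
    by (rule sum_bounded_below) (use assms coalition_subset D_min_le in blast)
  then show ?thesis by (simp add: mult.commute)
qed

text \<open>Lower bound for the change of the level of cell \<open>i\<close> at the spiking instant \<open>e\<close>,
  relative to its value just after the previous spiking instant.\<close>
definition jump_lower :: "nat \<Rightarrow> real \<Rightarrow> real" where
  "jump_lower i e = (if i \<in> coal e then - th i else D_min * real (card (coal e)))"

definition level_invariant :: "nat \<Rightarrow> real \<Rightarrow> bool" where
  "level_invariant i T \<longleftrightarrow>
     0 \<le> level i T \<and> level i T < th i \<and> (\<Sum>e\<in>spikes \<inter> {..T}. jump_lower i e) \<le> level i T"

lemma level_invariant_0:
  assumes "i \<in> cells"
  shows "level_invariant i 0"
proof -
  have "spikes \<inter> {..0} = {}" using spikes_pos by force
  then show ?thesis using init assms by (simp add: level_invariant_def)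
qed

lemma level_invariant_flow:
  assumes "0 \<le> a" "a \<le> T" "{a<..T} \<inter> spikes = {}" "i \<in> cells" "level_invariant i a"
  shows "level_invariant i T"
proof -
  have bounds_a: "0 \<le> level i a" "level i a < th i"
    "(\<Sum>e\<in>spikes \<inter> {..a}. jump_lower i e) \<le> level i a"
    using assms(5) by (auto simp: level_invariant_def)
  have same_spikes: "spikes \<inter> {..T} = spikes \<inter> {..a}"
  proof
    show "spikes \<inter> {..T} \<subseteq> spikes \<inter> {..a}"
      using assms(3) by (auto simp: disjoint_iff not_le)
  qed (use assms(2) in auto)
  have "0 < v i" using v_pos assms(4) by blast
  then have "0 \<le> v i * (T - a)" using assms(2) by simp
  then show ?thesis
    using level_flow[OF assms(1-4) bounds_a(2)] bounds_a
    unfolding level_invariant_def same_spikes by auto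
qed

lemma level_invariant_jump:
  assumes t: "t \<in> spikes" and a: "0 \<le> a" "a < t" "{a<..<t} \<inter> spikes = {}"
    "spikes \<inter> {..a} = spikes \<inter> {..<t}"
    and i: "i \<in> cells" and inv_a: "level_invariant i a"
  shows "level_invariant i t"
proof -
  have a_bounds: "0 \<le> level i a" "level i a < th i"
    "(\<Sum>e\<in>spikes \<inter> {..a}. jump_lower i e) \<le> level i a"
    using inv_a by (auto simp: level_invariant_def)
  have "spikes \<inter> {..t} = insert t (spikes \<inter> {..a})" unfolding a(4) using t by auto
  then have sum_t: "(\<Sum>e\<in>spikes \<inter> {..t}. jump_lower i e)
      = jump_lower i t + (\<Sum>e\<in>spikes \<inter> {..a}. jump_lower i e)"
    using a(2) finite_spikes_atMost by simp
  have jump_t: "i \<in> coal t \<Longrightarrow> level i t = 0"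
    "i \<notin> coal t \<Longrightarrow> level i t = level_left i t + (\<Sum>k\<in>coal t - {i}. D k i)"
    using jump t i by blast+
  show ?thesis
  proof (cases "i \<in> coal t")
    case True
    then have "level i t = 0" "jump_lower i t = - th i" using jump_t by (auto simp: jump_lower_def)
    moreover have "0 < th i" using th_pos i by simp
    ultimately show ?thesis
      using sum_t a_bounds unfolding level_invariant_def by simp
  next
    case False
    then have "coal t - {i} = coal t" by simp
    then have level_t: "level i t = level_left i t + (\<Sum>k\<in>coal t. D k i)"
      using jump_t(2) False by simp
    have "level_left i t + (\<Sum>k\<in>coal t. D k i) < th i"
      using not_in_coalition_below_threshold[of cells i] i False by simp
    moreover have "level i a \<le> level_left i t"
      using level_left_ge[OF a(1-3) i a_bounds(2)] .
    moreover have "jump_lower i t = D_min * real (card (coal t))"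
      using False by (simp add: jump_lower_def)
    moreover have "0 \<le> D_min * real (card (coal t))" using D_min_pos by simp
    ultimately show ?thesis
      using sum_t a_bounds level_t sum_coalition_ge[OF i False]
      unfolding level_invariant_def by (intro conjI) linarith+
  qed
qed

lemma level_invariant_holds:
  assumes i: "i \<in> cells"
  shows "0 \<le> T \<Longrightarrow> level_invariant i T"
proof (induction "card (spikes \<inter> {..T})" arbitrary: T rule: less_induct)
  case less
  show ?case
  proof (cases "spikes \<inter> {..T} = {}")
    case True
    then have no_spike: "{0<..T} \<inter> spikes = {}" by auto
    show ?thesis using level_invariant_flow[OF _ less.prems no_spike i level_invariant_0[OF i]] by simp
  next
    case False
    define t where "t = Max (spikes \<inter> {..T})"
    have "t \<in> spikes \<inter> {..T}"
      unfolding t_def using False finite_spikes_atMost by (intro Max_in)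
    then have t: "t \<in> spikes" "t \<le> T" by auto
    have le_t: "s \<le> t" if "s \<in> spikes" "s \<le> T" for s
      unfolding t_def using finite_spikes_atMost that by (intro Max_ge) auto
    have after_t: "{t<..T} \<inter> spikes = {}"
    proof (rule ccontr)
      assume "{t<..T} \<inter> spikes \<noteq> {}"
      then obtain s where "s \<in> spikes" "t < s" "s \<le> T" by auto
      with le_t show False by fastforce
    qed
    obtain a where a: "0 \<le> a" "a < t" "{a<..<t} \<inter> spikes = {}" "spikes \<inter> {..a} = spikes \<inter> {..<t}"
      using last_spike_before[OF t(1)] by blast
    have "spikes \<inter> {..a} \<subset> spikes \<inter> {..T}" unfolding a(4) using t by auto
    then have "card (spikes \<inter> {..a}) < card (spikes \<inter> {..T})"
      using finite_spikes_atMost by (intro psubset_card_mono)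
    then have "level_invariant i a" using less.hyps[of a] a(1) by simp
    then have "level_invariant i t" using level_invariant_jump[OF t(1) a i] by blast
    then show ?thesis using level_invariant_flow[OF _ t(2) after_t i] spikes_pos[OF t(1)] by simp
  qed
qed

lemma level_left_nonneg:
  assumes "t \<in> spikes" "j \<in> cells"
  shows "0 \<le> level_left j t"
proof -
  obtain a where a: "0 \<le> a" "a < t" "{a<..<t} \<inter> spikes = {}"
    "spikes \<inter> {..a} = spikes \<inter> {..<t}"
    by (rule last_spike_before[OF assms(1)])
  have "0 \<le> level j a" "level j a < th j"
    using level_invariant_holds[OF assms(2) a(1)] by (simp_all add: level_invariant_def)
  moreover have "level j a \<le> level_left j t"
    using a(1-3) assms(2) calculation(2) by (rule level_left_ge)
  ultimately show ?thesis by linarith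
qed

lemma finite_coal: "finite (coal t)"
  by (rule finite_subset[OF coalition_subset finite_atLeastAtMost])

lemma coal_nonempty: "t \<in> spikes \<Longrightarrow> coal t \<noteq> {}"
  using layer_subset_coalition[of cells th D _ 0] by (fastforce simp: spiking_instants_def)

lemma card_coal_bound:
  assumes "t \<in> spikes" "coal t \<noteq> cells"
  shows "D_min * real (card (coal t)) < th_max"
proof -
  obtain j where j: "j \<in> cells" "j \<notin> coal t" using assms(2) coalition_subset by blast
  have "level_left j t + (\<Sum>i\<in>coal t. D i j) < th j"
    using not_in_coalition_below_threshold[of cells j] j by simp
  then show ?thesis
    using sum_coalition_ge[OF j] level_left_nonneg[OF assms(1) j(1)] th_le_th_max[OF j(1)] by linarith
qed

lemma infinite_spikes: "infinite spikes"
proof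
  assume fin: "finite spikes"
  have cell: "1 \<in> cells" using m2 by simp
  define T0 where "T0 = Max (insert 0 spikes)"
  define T where "T = T0 + th 1 / v 1"
  have "0 < v 1" "0 < th 1" using v_pos th_pos cell by auto
  then have "T0 \<le> T" by (simp add: T_def)
  have "0 \<le> T0" "{T0<..T} \<inter> spikes = {}" using fin by (auto simp: T0_def)
  moreover have "0 \<le> level 1 T0" "level 1 T0 < th 1"
    using level_invariant_holds[OF cell \<open>0 \<le> T0\<close>] by (simp_all add: level_invariant_def)
  ultimately have "level 1 T0 + v 1 * (T - T0) < th 1"
    using level_flow[OF _ \<open>T0 \<le> T\<close> _ cell] by fastforce
  moreover have "v 1 * (T - T0) = th 1" using \<open>0 < v 1\<close> by (simp add: T_def)
  ultimately show False using \<open>0 \<le> level 1 T0\<close> by linarith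
qed

lemma many_spikes_before: "\<exists>T\<ge>0. N \<le> card (spikes \<inter> {..T})"
proof -
  obtain F where F: "F \<subseteq> spikes" "finite F" "card F = Suc N"
    using infinite_arbitrarily_large[OF infinite_spikes] by blast
  then have "F \<noteq> {}" by auto
  define T where "T = Max F"
  have "T \<in> F" unfolding T_def using F \<open>F \<noteq> {}\<close> by (intro Max_in) auto
  then have "T \<in> spikes" using F(1) by blast
  moreover have "F \<subseteq> spikes \<inter> {..T}" using F by (auto simp: T_def)
  then have "card F \<le> card (spikes \<inter> {..T})" using finite_spikes_atMost by (rule card_mono[rotated])
  ultimately show ?thesis using F(3) spikes_pos by (intro exI[of _ T]) (auto intro: less_imp_le)
qed

definition jump_lower_total :: "real \<Rightarrow> real" where
  "jump_lower_total e = (\<Sum>i\<in>cells. jump_lower i e)"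

lemma jump_lower_total_eq:
  "jump_lower_total e = - (\<Sum>i\<in>coal e. th i) + real (m - card (coal e)) * (D_min * real (card (coal e)))"
proof -
  have "jump_lower_total e = (\<Sum>i\<in>cells \<inter> {i. i \<in> coal e}. - th i)
      + (\<Sum>i\<in>cells \<inter> - {i. i \<in> coal e}. D_min * real (card (coal e)))"
    unfolding jump_lower_total_def jump_lower_def by (rule sum.If_cases) simp
  moreover have "cells \<inter> {i. i \<in> coal e} = coal e" using coalition_subset by blast
  moreover have "cells \<inter> - {i. i \<in> coal e} = cells - coal e" by blast
  moreover have "card (cells - coal e) = m - card (coal e)"
    using card_Diff_subset[OF finite_coal coalition_subset] by simp
  ultimately show ?thesis by (simp add: sum_negf)
qed

lemma jump_lower_total_ge: "- real m * th_max \<le> jump_lower_total e"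
proof -
  have "card (coal e) \<le> m" using card_mono[OF _ coalition_subset[of cells]] by simp
  moreover have "(\<Sum>i\<in>coal e. th i) \<le> real (card (coal e)) * th_max"
    by (rule sum_bounded_above) (use coalition_subset th_le_th_max in blast)
  moreover have "real (card (coal e)) * th_max \<le> real m * th_max"
    using calculation(1) th_max_pos by (intro mult_right_mono) auto
  ultimately have "(\<Sum>i\<in>coal e. th i) \<le> real m * th_max" by linarith
  moreover have "0 \<le> real (m - card (coal e)) * (D_min * real (card (coal e)))"
    using D_min_pos by simp
  ultimately show ?thesis unfolding jump_lower_total_eq by linarith
qed

lemma jump_lower_total_non_grand_ge:
  assumes "t \<in> spikes" "coal t \<noteq> cells"
  shows "real m * D_min - 2 * th_max \<le> jump_lower_total t"
proof -
  define K where "K = real (card (coal t))"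
  have "card (coal t) \<le> m" using card_mono[OF _ coalition_subset[of cells]] by simp
  then have real_diff: "real (m - card (coal t)) = real m - K" by (simp add: K_def of_nat_diff)
  have K1: "1 \<le> K"
    using coal_nonempty[OF assms(1)] finite_coal by (simp add: K_def Suc_le_eq card_gt_0_iff)
  have small: "D_min * K < th_max" using card_coal_bound[OF assms] by (simp add: K_def)
  have "(\<Sum>i\<in>coal t. th i) \<le> K * th_max"
    unfolding K_def by (rule sum_bounded_above) (use coalition_subset th_le_th_max in blast)
  moreover have "jump_lower_total t = - (\<Sum>i\<in>coal t. th i) + (real m - K) * (D_min * K)"
    unfolding jump_lower_total_eq real_diff K_def ..
  ultimately have "K * (real m * D_min - K * D_min - th_max) \<le> jump_lower_total t"
    by (simp add: algebra_simps)
  moreover have "1 * (real m * D_min - K * D_min - th_max) \<le> K * (real m * D_min - K * D_min - th_max)"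
    using K1 small double_th_max_less by (intro mult_right_mono) (auto simp: mult.commute)
  ultimately show ?thesis using small by (simp add: mult.commute)
qed

lemma sum_jump_lower_total_less:
  assumes "0 \<le> T"
  shows "(\<Sum>e\<in>spikes \<inter> {..T}. jump_lower_total e) < real m * th_max"
proof -
  have "(\<Sum>e\<in>spikes \<inter> {..T}. jump_lower_total e) = (\<Sum>i\<in>cells. \<Sum>e\<in>spikes \<inter> {..T}. jump_lower i e)"
    unfolding jump_lower_total_def by (rule sum.swap)
  also have "\<dots> < (\<Sum>i\<in>cells. th_max)"
  proof (rule sum_strict_mono)
    fix i assume i: "i \<in> cells"
    show "(\<Sum>e\<in>spikes \<inter> {..T}. jump_lower i e) < th_max"
      using level_invariant_holds[OF i assms] th_le_th_max[OF i] by (auto simp: level_invariant_def)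
  qed (use m2 in auto)
  finally show ?thesis by simp
qed

lemma sum_jump_lower_total_ge:
  assumes "finite E" "E \<subseteq> spikes"
  shows "real (card (E - {t. coal t = cells})) * (real m * D_min - 2 * th_max)
           - real (card (E \<inter> {t. coal t = cells})) * (real m * th_max)
         \<le> (\<Sum>e\<in>E. jump_lower_total e)"
proof -
  let ?G = "{t. coal t = cells}"
  have "- (real (card (E \<inter> ?G)) * (real m * th_max)) \<le> (\<Sum>e\<in>E \<inter> ?G. jump_lower_total e)"
    using sum_mono[of "E \<inter> ?G" "\<lambda>_. - (real m * th_max)" jump_lower_total] jump_lower_total_ge
    by simp
  moreover have "real (card (E - ?G)) * (real m * D_min - 2 * th_max) \<le> (\<Sum>e\<in>E - ?G. jump_lower_total e)"
    using sum_mono[of "E - ?G" "\<lambda>_. real m * D_min - 2 * th_max" jump_lower_total]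
      jump_lower_total_non_grand_ge assms(2) by auto
  ultimately show ?thesis using sum.Int_Diff[OF assms(1), of jump_lower_total ?G] by linarith
qed

theorem infinite_grand_coalitions: "infinite {t \<in> spikes. coal t = cells}"
proof
  assume fin: "finite {t \<in> spikes. coal t = cells}"
  define g where "g = real (card {t \<in> spikes. coal t = cells})"
  define M where "M = real m * th_max"
  define \<delta> where "\<delta> = real m * D_min - 2 * th_max"
  have \<delta>: "0 < \<delta>" using double_th_max_less by (simp add: \<delta>_def)
  obtain T where T: "0 \<le> T" "card {t \<in> spikes. coal t = cells} + nat \<lceil>(g + 1) * M / \<delta>\<rceil> \<le> card (spikes \<inter> {..T})"
    using many_spikes_before by blast
  define E where "E = spikes \<inter> {..T}"
  have fin_E: "finite E" using finite_spikes_atMost by (simp add: E_def)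
  have "E \<inter> {t. coal t = cells} \<subseteq> {t \<in> spikes. coal t = cells}" by (auto simp: E_def)
  then have grand: "real (card (E \<inter> {t. coal t = cells})) \<le> g"
    using fin by (simp add: g_def card_mono)
  have "(g + 1) * M / \<delta> \<le> real (card E) - g"
    using real_nat_ceiling_ge[of "(g + 1) * M / \<delta>"] of_nat_mono[OF T(2), where 'a = real]
    by (simp add: E_def g_def)
  also have "\<dots> \<le> real (card (E - {t. coal t = cells}))"
    using card_Int_Diff[OF fin_E, of "{t. coal t = cells}"] grand by simp
  finally have "(g + 1) * M \<le> real (card (E - {t. coal t = cells})) * \<delta>"
    using \<delta> by (simp add: pos_divide_le_eq)
  also have "\<dots> \<le> g * M + (\<Sum>e\<in>E. jump_lower_total e)"
  proof -
    have "real (card (E \<inter> {t. coal t = cells})) * M \<le> g * M"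
      using grand th_max_pos by (intro mult_right_mono) (simp_all add: M_def)
    then show ?thesis
      using sum_jump_lower_total_ge[OF fin_E] unfolding E_def M_def \<delta>_def by simp
  qed
  also have "\<dots> < g * M + M"
    using sum_jump_lower_total_less[OF T(1)] by (simp add: E_def M_def)
  finally show False by (simp add: algebra_simps)
qed

end

text \<open>Compactness and continuity only matter for the existence of trajectories, which are
  given here, and cooperativity is implied by \<open>large_enough\<close>.\<close>
theorem theorem1:
  fixes m :: nat
    and X :: "nat \<Rightarrow> 'a::euclidean_space set"
    and f :: "nat \<Rightarrow> 'a \<Rightarrow> 'a"
    and S :: "nat \<Rightarrow> 'a \<Rightarrow> real"
    and gradS :: "nat \<Rightarrow> 'a \<Rightarrow> 'a"
    and U :: "nat \<Rightarrow> 'a set"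
    and th v :: "nat \<Rightarrow> real"
    and D :: "nat \<Rightarrow> nat \<Rightarrow> real"
    and x :: "nat \<Rightarrow> real \<Rightarrow> 'a"
  assumes m2: "m \<ge> 2"
    and X_compact: "\<forall>i\<in>{1..m}. compact (X i)"
    and f_cont: "\<forall>i\<in>{1..m}. continuous_on (X i) (f i)"
    and S_C1: "\<forall>i\<in>{1..m}. open (U i) \<and> X i \<subseteq> U i \<and> continuous_on (U i) (gradS i) \<and>
                 (\<forall>y\<in>U i. (S i has_derivative (\<lambda>h. gradS i y \<bullet> h)) (at y))"
    and th_pos: "\<forall>i\<in>{1..m}. th i > 0"
    and v_pos: "\<forall>i\<in>{1..m}. v i > 0"
    and drift: "\<forall>i\<in>{1..m}. \<forall>y\<in>X i. S i y < th i \<longrightarrow> gradS i y \<bullet> f i y > v i"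
    and coop: "cooperative {1..m} D"
    and large: "large_enough m th D"
    and init: "\<forall>i\<in>{1..m}. 0 \<le> S i (x i 0) \<and> S i (x i 0) < th i"
    and in_X: "\<forall>i\<in>{1..m}. \<forall>t\<ge>0. x i t \<in> X i"
    and loc_fin: "\<forall>b. finite (spiking_instants {1..m} th D S x \<inter> {..b})"
    and flow: "\<forall>i\<in>{1..m}. \<forall>a b. 0 \<le> a \<and> a < b \<and> {a<..<b} \<inter> spiking_instants {1..m} th D S x = {} \<longrightarrow>
                 (\<forall>t\<in>{a..<b}. (x i has_vector_derivative f i (x i t)) (at t within {a..<b}))"
    and jump: "\<forall>t\<in>spiking_instants {1..m} th D S x. \<forall>j\<in>{1..m}.
                 (j \<in> coalition {1..m} th D (\<lambda>k. S_left S x k t) \<longrightarrow> S j (x j t) = 0) \<and>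
                 (j \<notin> coalition {1..m} th D (\<lambda>k. S_left S x k t) \<longrightarrow>
                    S j (x j t) = S_left S x j t +
                      (\<Sum>i\<in>coalition {1..m} th D (\<lambda>k. S_left S x k t) - {j}. D i j))"
  shows "infinite {t\<in>spiking_instants {1..m} th D S x.
                     coalition {1..m} th D (\<lambda>k. S_left S x k t) = {1..m}}"
proof -
  interpret spiking_network m X f S gradS U th v D x
    by unfold_locales (fact m2 S_C1 th_pos v_pos drift large init in_X loc_fin flow jump)+
  show ?thesis by (rule infinite_grand_coalitions)
qed

end
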